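(* For all $x^0\in\mathcal{F}(\mathcal{T},\mathbb{R})$ and $x^\uparrow,x^\downarrow\in\mathcal{F}(\mathcal{T},\mathbb{R}_+)$, the following equivalences hold. (i) $x(x^0(t),x^\uparrow(t),x^\downarrow(t),\xi(t))\le\bar x$ for all $\xi\in\Xi$ and all $t\in\mathcal{T}$ if and only if $x^0_k+x^\uparrow_k\le\bar x$ for all $k\in\mathcal{K}$. (ii) $x(x^0(t),x^\uparrow(t),x^\downarrow(t),\xi(t))\ge\underline{x}$ for all $\xi\in\Xi$ and all $t\in\mathcal{T}$ if and only if $x^0_k-x^\downarrow_k\ge\underline{x}$ for all $k\in\mathcal{K}$.
   Context: Fix a positive integer $K$, $\Delta t>0$, $T=K\Delta t$, $\mathcal{T}=[0,T]$ and $\mathcal{K}=\{1,\dots,K\}$. Let $\mathcal{T}_k=[(k-1)\Delta t,k\Delta t)$ for $k<K$ and $\mathcal{T}_K=[T-\Delta t,T]$. For $U\subseteq\mathbb{R}$, $\mathcal{F}(\mathcal{T},U)$ is the set of functions $\mathcal{T}\to U$ that are constant on each $\mathcal{T}_k$, and $\mathcal{R}(\mathcal{T},U)$ is the set of Riemann integrable functions $\mathcal{T}\to U$. For $f\in\mathcal{F}(\mathcal{T},U)$, $f_k$ denotes the value of $f$ on $\mathcal{T}_k$. Write $[z]^+=\max\{z,0\}$ and $[z]^-=\max\{-z,0\}$. Let $\underline{x}\le 0\le\bar x$ and $\gamma\in[0,T]$. The power output is $x(a,b,c,s)=a+[s]^+b-[s]^-c$. The uncertainty set is $\Xi=\{\xi\in\mathcal{R}(\mathcal{T},[-1,1]):\int_{\mathcal{T}}|\xi(t)|\,dt\le\gamma\}$.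 *)

theory Defs
  imports "HOL-Analysis.Analysis"
begin

definition interval_k :: "nat \<Rightarrow> real \<Rightarrow> nat \<Rightarrow> real set" where
  "interval_k K dt k =
     (if k < K then {(real k - 1) * dt ..< real k * dt}
      else {real K * dt - dt .. real K * dt})"

text \<open>F(T,U): functions on [0,T] taking values in U that are constant on each T_k.
  Functions are modelled as real => real; only their values on [0, K dt] matter.\<close>
definition piecewise_const :: "nat \<Rightarrow> real \<Rightarrow> real set \<Rightarrow> (real \<Rightarrow> real) \<Rightarrow> bool" where
  "piecewise_const K dt U f \<longleftrightarrow>
     (\<forall>t\<in>{0 .. real K * dt}. f t \<in> U) \<and>
     (\<forall>k\<in>{1..K}. \<forall>s\<in>interval_k K dt k. \<forall>t\<in>interval_k K dt k. f s = f t)"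

definition val_k :: "real \<Rightarrow> (real \<Rightarrow> real) \<Rightarrow> nat \<Rightarrow> real" where
  "val_k dt f k = f ((real k - 1) * dt)"

definition riemann_has_integral :: "(real \<Rightarrow> real) \<Rightarrow> real set \<Rightarrow> real \<Rightarrow> bool" where
  "riemann_has_integral f S I \<longleftrightarrow>
     (\<forall>e>0. \<exists>d>0. \<forall>p. p tagged_division_of S \<and> (\<lambda>x. ball x d) fine p \<longrightarrow>
        \<bar>(\<Sum>(x,L)\<in>p. Henstock_Kurzweil_Integration.content L * f x) - I\<bar> < e)"

definition riemann_integrable :: "(real \<Rightarrow> real) \<Rightarrow> real set \<Rightarrow> bool" where
  "riemann_integrable f S \<longleftrightarrow> (\<exists>I. riemann_has_integral f S I)"

definition pos_part :: "real \<Rightarrow> real" where "pos_part z = max z 0"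
definition neg_part :: "real \<Rightarrow> real" where "neg_part z = max (- z) 0"

definition power_out :: "real \<Rightarrow> real \<Rightarrow> real \<Rightarrow> real \<Rightarrow> real" where
  "power_out a b c s = a + pos_part s * b - neg_part s * c"

definition Xi :: "real \<Rightarrow> real \<Rightarrow> (real \<Rightarrow> real) set" where
  "Xi T \<gamma> = {\<xi>. (\<forall>t\<in>{0..T}. \<xi> t \<in> {-1..1}) \<and> riemann_integrable \<xi> {0..T} \<and>
                 (\<exists>I. riemann_has_integral (\<lambda>t. \<bar>\<xi> t\<bar>) {0..T} I \<and> I \<le> \<gamma>)}"

end

theory Submission
  imports Defs
begin

text \<open>Only the pointwise range [-1, 1] of an uncertainty realisation matters: a function
  that vanishes except at a single instant has Riemann integral 0, so every value
  s \<in> [-1, 1] at every instant t is attained by some \<xi> \<in> Xi, however small \<gamma> \<ge> 0 is.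
  The robust constraints thus reduce to the worst cases s = 1 and s = -1 of the power
  output at each instant, and by piecewise constancy to one inequality per interval.\<close>

hide_const (open) Polynomial.content

lemma riemann_has_integral_cmult:
  assumes "riemann_has_integral f S I"
  shows "riemann_has_integral (\<lambda>t. c * f t) S (c * I)"
proof (cases "c = 0")
  case True
  then show ?thesis by (simp add: riemann_has_integral_def)
next
  case False
  have scale: "(\<Sum>(x,L)\<in>p. content L * (c * f x)) - c * I = c * ((\<Sum>(x,L)\<in>p. content L * f x) - I)"
    for p :: "(real \<times> real set) set"
    by (simp add: sum_distrib_left case_prod_beta algebra_simps)
  show ?thesis
    unfolding riemann_has_integral_def
  proof (intro allI impI)
    fix e :: real
    assume "e > 0"
    with False assms obtain d where "d > 0" and d: "\<And>p. p tagged_division_of S \<and> (\<lambda>x. ball x d) fine p \<Longrightarrow>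
        \<bar>(\<Sum>(x,L)\<in>p. content L * f x) - I\<bar> < e / \<bar>c\<bar>"
      unfolding riemann_has_integral_def by (metis divide_pos_pos zero_less_abs_iff)
    have "\<bar>(\<Sum>(x,L)\<in>p. content L * (c * f x)) - c * I\<bar> < e"
      if "p tagged_division_of S \<and> (\<lambda>x. ball x d) fine p" for p
    proof -
      have "\<bar>c\<bar> * \<bar>(\<Sum>(x,L)\<in>p. content L * f x) - I\<bar> < e"
        using d[OF that] False by (simp add: pos_less_divide_eq mult.commute)
      then show ?thesis
        by (simp only: scale abs_mult)
    qed
    with \<open>d > 0\<close> show "\<exists>d>0. \<forall>p. p tagged_division_of S \<and> (\<lambda>x. ball x d) fine p \<longrightarrow>
        \<bar>(\<Sum>(x,L)\<in>p. content L * (c * f x)) - c * I\<bar> < e"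
      by blast
  qed
qed

lemma sum_content_tagged_at_le:
  fixes c d :: real
  assumes p: "p tagged_division_of S" and fine: "(\<lambda>x. ball x d) fine p" and "d > 0"
  shows "(\<Sum>(x,L)\<in>{(x,L)\<in>p. x = c}. content L) \<le> 2 * d"
proof -
  let ?q = "{(x,L)\<in>p. x = c}"
  have q: "?q tagged_partial_division_of S"
    using p tagged_partial_division_subset[of p S ?q] unfolding tagged_division_of_def by auto
  have "(\<Sum>(x,L)\<in>?q. content L) = sum content (snd ` ?q)"
    by (rule sum.over_tagged_division_lemma[OF tagged_partial_division_of_Union_self[OF q]])
      (simp add: content_eq_0_interior)
  also have "\<dots> \<le> content (cbox (c - d) (c + d))"
  proof (rule subadditive_content_division[OF partial_division_of_tagged_division[OF q]])
    show "\<Union>(snd ` ?q) \<subseteq> cbox (c - d) (c + d)"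
      using fine by (force simp: fine_def dist_real_def abs_less_iff)
  qed
  also have "\<dots> = 2 * d"
    using \<open>d > 0\<close> by simp
  finally show ?thesis .
qed

lemma riemann_has_integral_spike:
  fixes c :: real
  shows "riemann_has_integral (\<lambda>t. if t = c then 1 else 0) S 0"
  unfolding riemann_has_integral_def
proof (intro allI impI)
  fix e :: real
  assume "e > 0"
  have "\<bar>\<Sum>(x,L)\<in>p. content L * (if x = c then 1 else 0)\<bar> < e"
    if p: "p tagged_division_of S" and fine: "(\<lambda>x. ball x (e/4)) fine p" for p
  proof -
    have "(\<Sum>(x,L)\<in>p. content L * (if x = c then 1 else 0))
        = (\<Sum>z\<in>p. if fst z = c then content (snd z) else 0)"
      by (rule sum.cong) auto
    also have "\<dots> = (\<Sum>z\<in>{z\<in>p. fst z = c}. content (snd z))"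
      by (simp add: sum.inter_filter[OF tagged_division_of_finite[OF p]])
    also have "\<dots> = (\<Sum>(x,L)\<in>{(x,L)\<in>p. x = c}. content L)"
      by (rule sum.cong) auto
    finally have "(\<Sum>(x,L)\<in>p. content L * (if x = c then 1 else 0))
        = (\<Sum>(x,L)\<in>{(x,L)\<in>p. x = c}. content L)" .
    moreover have "(\<Sum>(x,L)\<in>{(x,L)\<in>p. x = c}. content L) \<le> e/2"
      using sum_content_tagged_at_le[OF p fine] \<open>e > 0\<close> by simp
    moreover have "(\<Sum>(x,L)\<in>{(x,L)\<in>p. x = c}. content L) \<ge> 0"
      by (simp add: sum_nonneg case_prod_beta)
    ultimately show ?thesis
      using \<open>e > 0\<close> by simp
  qed
  with \<open>e > 0\<close> show "\<exists>d>0. \<forall>p. p tagged_division_of S \<and> (\<lambda>x. ball x d) fine p \<longrightarrow>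
      \<bar>(\<Sum>(x,L)\<in>p. content L * (if x = c then 1 else 0)) - 0\<bar> < e"
    by (intro exI[of _ "e/4"]) auto
qed

lemma spike_in_Xi:
  assumes "c \<in> {0..T}" and "0 \<le> \<gamma>" and "v \<in> {-1..1}"
  shows "(\<lambda>t. if t = c then v else 0) \<in> Xi T \<gamma>"
proof -
  have spike: "riemann_has_integral (\<lambda>t. if t = c then a else 0) {0..T} 0" for a
  proof -
    have "(\<lambda>t. a * (if t = c then 1 else 0)) = (\<lambda>t. if t = c then a else 0)"
      by auto
    then show ?thesis
      using riemann_has_integral_cmult[OF riemann_has_integral_spike[of c "{0..T}"], of a] by simp
  qed
  moreover have "(\<lambda>t. \<bar>if t = c then v else 0\<bar>) = (\<lambda>t. if t = c then \<bar>v\<bar> else 0)"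
    by auto
  ultimately show ?thesis
    using assms unfolding Xi_def riemann_integrable_def by auto
qed

lemma all_Xi_iff_all_values:
  fixes P :: "real \<Rightarrow> real \<Rightarrow> bool"
  assumes "0 \<le> \<gamma>"
  shows "(\<forall>\<xi>\<in>Xi T \<gamma>. \<forall>t\<in>{0..T}. P t (\<xi> t)) \<longleftrightarrow> (\<forall>t\<in>{0..T}. \<forall>s\<in>{-1..1}. P t s)"
proof
  assume robust: "\<forall>\<xi>\<in>Xi T \<gamma>. \<forall>t\<in>{0..T}. P t (\<xi> t)"
  show "\<forall>t\<in>{0..T}. \<forall>s\<in>{-1..1}. P t s"
  proof (intro ballI)
    fix t s :: real
    assume t: "t \<in> {0..T}" and s: "s \<in> {-1..1}"
    have "P t (\<xi> t)" if "\<xi> \<in> Xi T \<gamma>" for \<xi>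
      using robust t that by blast
    from this[OF spike_in_Xi[OF t assms s]] show "P t s"
      by simp
  qed
next
  assume "\<forall>t\<in>{0..T}. \<forall>s\<in>{-1..1}. P t s"
  then show "\<forall>\<xi>\<in>Xi T \<gamma>. \<forall>t\<in>{0..T}. P t (\<xi> t)"
    unfolding Xi_def by blast
qed

lemma power_out_le_iff:
  assumes "0 \<le> b" and "0 \<le> c"
  shows "(\<forall>s\<in>{-1..1}. power_out a b c s \<le> h) \<longleftrightarrow> a + b \<le> h"
proof
  assume "\<forall>s\<in>{-1..1}. power_out a b c s \<le> h"
  then have "power_out a b c 1 \<le> h"
    by simp
  then show "a + b \<le> h"
    by (simp add: power_out_def pos_part_def neg_part_def)
next
  assume "a + b \<le> h"
  show "\<forall>s\<in>{-1..1}. power_out a b c s \<le> h"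
  proof
    fix s :: real
    assume "s \<in> {-1..1}"
    then have "pos_part s * b \<le> b"
      using assms by (auto simp: pos_part_def intro: mult_left_le_one_le)
    moreover have "0 \<le> neg_part s * c"
      using assms by (simp add: neg_part_def)
    ultimately show "power_out a b c s \<le> h"
      using \<open>a + b \<le> h\<close> by (simp add: power_out_def)
  qed
qed

lemma power_out_ge_iff:
  assumes "0 \<le> b" and "0 \<le> c"
  shows "(\<forall>s\<in>{-1..1}. h \<le> power_out a b c s) \<longleftrightarrow> h \<le> a - c"
proof
  assume "\<forall>s\<in>{-1..1}. h \<le> power_out a b c s"
  then have "h \<le> power_out a b c (-1)"
    by simp
  then show "h \<le> a - c"
    by (simp add: power_out_def pos_part_def neg_part_def)
next
  assume "h \<le> a - c"
  show "\<forall>s\<in>{-1..1}. h \<le> power_out a b c s"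
  proof
    fix s :: real
    assume "s \<in> {-1..1}"
    then have "neg_part s * c \<le> c"
      using assms by (auto simp: neg_part_def intro: mult_left_le_one_le)
    moreover have "0 \<le> pos_part s * b"
      using assms by (simp add: pos_part_def)
    ultimately show "h \<le> power_out a b c s"
      using \<open>h \<le> a - c\<close> by (simp add: power_out_def)
  qed
qed

lemma left_endpoint_in_interval_k:
  assumes "k \<in> {1..K}" and "dt > 0"
  shows "(real k - 1) * dt \<in> interval_k K dt k"
  using assms unfolding interval_k_def by (auto simp: algebra_simps)

lemma interval_k_subset:
  assumes "k \<in> {1..K}" and "dt > 0"
  shows "interval_k K dt k \<subseteq> {0 .. real K * dt}"
proof -
  have "0 \<le> (real k - 1) * dt" and "real k * dt \<le> real K * dt" and "dt \<le> real K * dt"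
    using assms by auto
  then show ?thesis
    unfolding interval_k_def by auto
qed

lemma interval_k_cover:
  assumes "K > 0" and "dt > 0" and "t \<in> {0 .. real K * dt}"
  shows "\<exists>k\<in>{1..K}. t \<in> interval_k K dt k"
proof (cases "t = real K * dt")
  case True
  then show ?thesis
    using assms by (auto simp: interval_k_def intro!: bexI[of _ K])
next
  case False
  define k where "k = nat \<lfloor>t / dt\<rfloor> + 1"
  have "0 \<le> t / dt" and "t / dt < real K"
    using assms False by (auto simp: field_simps)
  then have "0 \<le> \<lfloor>t / dt\<rfloor>" and "\<lfloor>t / dt\<rfloor> < int K"
    by linarith+
  then have "k \<in> {1..K}" and k: "real k - 1 = of_int \<lfloor>t / dt\<rfloor>"
    unfolding k_def by (simp_all add: Suc_le_eq nat_less_iff)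
  have "real k - 1 \<le> t / dt" and "t / dt < real k"
    using k real_of_int_floor_add_one_gt[of "t / dt"] by linarith+
  then have "real k * dt - dt \<le> t" and "t < real k * dt"
    using \<open>dt > 0\<close> by (simp_all add: field_simps)
  with \<open>k \<in> {1..K}\<close> show ?thesis
    unfolding interval_k_def by (auto simp: left_diff_distrib intro!: bexI[of _ k])
qed

lemma all_time_iff_all_intervals:
  assumes "K > 0" and "dt > 0"
    and local: "\<And>k t. k \<in> {1..K} \<Longrightarrow> t \<in> interval_k K dt k \<Longrightarrow> P t \<longleftrightarrow> R k"
  shows "(\<forall>t\<in>{0 .. real K * dt}. P t) \<longleftrightarrow> (\<forall>k\<in>{1..K}. R k)"
  using interval_k_cover[OF assms(1,2)] local
    interval_k_subset[OF _ assms(2)] left_endpoint_in_interval_k[OF _ assms(2)]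
  by blast

lemma piecewise_const_eq_val_k:
  assumes "piecewise_const K dt U f" and "dt > 0" and "k \<in> {1..K}" and "t \<in> interval_k K dt k"
  shows "f t = val_k dt f k"
  using assms left_endpoint_in_interval_k[OF assms(3,2)]
  unfolding piecewise_const_def val_k_def by blast

lemma val_k_in_range:
  assumes "piecewise_const K dt U f" and "dt > 0" and "k \<in> {1..K}"
  shows "val_k dt f k \<in> U"
  using assms left_endpoint_in_interval_k[OF assms(3,2)] interval_k_subset[OF assms(3,2)]
  unfolding piecewise_const_def val_k_def by blast

lemma robust_iff_all_intervals:
  assumes "K > 0" and "dt > 0" and "0 \<le> \<gamma>"
    and "\<And>k t. k \<in> {1..K} \<Longrightarrow> t \<in> interval_k K dt k \<Longrightarrow> (\<forall>s\<in>{-1..1}. P t s) \<longleftrightarrow> R k"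
  shows "(\<forall>\<xi>\<in>Xi (real K * dt) \<gamma>. \<forall>t\<in>{0 .. real K * dt}. P t (\<xi> t)) \<longleftrightarrow> (\<forall>k\<in>{1..K}. R k)"
  unfolding all_Xi_iff_all_values[OF assms(3)] using assms(4) by (rule all_time_iff_all_intervals[OF assms(1,2)])

theorem proposition5:
  fixes K :: nat and dt xlo xhi \<gamma> :: real and x0 xup xdn :: "real \<Rightarrow> real"
  assumes "K > 0" and "dt > 0"
    and "xlo \<le> 0" and "0 \<le> xhi"
    and "0 \<le> \<gamma>" and "\<gamma> \<le> real K * dt"
    and "piecewise_const K dt UNIV x0"
    and "piecewise_const K dt {0..} xup"
    and "piecewise_const K dt {0..} xdn"
  shows "((\<forall>\<xi>\<in>Xi (real K * dt) \<gamma>. \<forall>t\<in>{0 .. real K * dt}.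
              power_out (x0 t) (xup t) (xdn t) (\<xi> t) \<le> xhi)
          \<longleftrightarrow> (\<forall>k\<in>{1..K}. val_k dt x0 k + val_k dt xup k \<le> xhi))
       \<and> ((\<forall>\<xi>\<in>Xi (real K * dt) \<gamma>. \<forall>t\<in>{0 .. real K * dt}.
              power_out (x0 t) (xup t) (xdn t) (\<xi> t) \<ge> xlo)
          \<longleftrightarrow> (\<forall>k\<in>{1..K}. val_k dt x0 k - val_k dt xdn k \<ge> xlo))"
proof (intro conjI robust_iff_all_intervals[OF assms(1,2,5)])
  fix k t
  assume k: "k \<in> {1..K}" and t: "t \<in> interval_k K dt k"
  have "x0 t = val_k dt x0 k" and "xup t = val_k dt xup k" and "xdn t = val_k dt xdn k"
    using piecewise_const_eq_val_k[OF _ assms(2) k t] assms(7-9) by blast+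
  moreover have "0 \<le> val_k dt xup k" and "0 \<le> val_k dt xdn k"
    using val_k_in_range[OF _ assms(2) k] assms(8,9) by auto
  ultimately show "(\<forall>s\<in>{-1..1}. power_out (x0 t) (xup t) (xdn t) s \<le> xhi)
        \<longleftrightarrow> val_k dt x0 k + val_k dt xup k \<le> xhi"
    and "(\<forall>s\<in>{-1..1}. xlo \<le> power_out (x0 t) (xup t) (xdn t) s)
        \<longleftrightarrow> xlo \<le> val_k dt x0 k - val_k dt xdn k"
    by (simp_all add: power_out_le_iff power_out_ge_iff)
qed

end
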